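(* Let $\Sigma=(\mathbb{N}_0,X,U,\mathscr{U},\phi)$ be a control system as in the standing setup and let $Q\subset X$ be a control set with $\operatorname{cl}\operatorname{Int}(Q)=\operatorname{cl}Q$. Then $Q$ is either mean equi-invariant or mean unstable.
   Context: Standing setup: $(X,d)$ is a metric space, $U$ is a compact metric space, and $F:X\times U\to X$ is a map such that $F_u:=F(\cdot,u)$ is continuous for every $u\in U$. Let $\mathscr U=U^{\mathbb N_0}$ with the product topology. For $\omega=(\omega_0,\omega_1,\dots)\in\mathscr U$, $x\in X$, set $\phi(0,x,\omega)=x$ and $\phi(k,x,\omega)=F_{\omega_{k-1}}\circ\cdots\circ F_{\omega_0}(x)$ for $k\ge1$. It is assumed that $\phi:\mathbb N_0\times X\times\mathscr U\to X$ is continuous. Notation: $B(x,\delta)$ is the open ball; $d(y,Q)=\inf_{q\in Q}d(y,q)$; $\operatorname{Int}$ and $\operatorname{cl}$ denote interior and closure in $X$. Control set: $D\subset X$ is a control set if (i) for every $x\in D$ there is $\omega\in\mathscr U$ with $\phi(k,x,\omega)\in D$ for all $k\in\mathbb N_0$; (ii) for every $x\in D$, $D\subset\operatorname{cl}\mathcal O^+(x)$, where $\mathcal O^+(x)=\{\phi(m,x,\omega):m\in\mathbb N_0,\omega\in\mathscr U\}$; (iii) $D$ is maximal with (i) and (ii). $x\in Q$ is a mean equi-invariant point of $Q$ if for every $\varepsilon>0$ there exist $\delta>0$ and $\omega\in\mathscr U$ such that $\limsup_{n\to\infty}\frac1n\sum_{i=0}^{n-1}d(\phi(i,y,\omega),Q)<\varepsilon$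 for all $y\in B(x,\delta)\cap Q$; $Q$ is mean equi-invariant if every point of $Q$ is such a point. $Q$ is mean unstable if there exists $\varepsilon>0$ such that for every $x\in Q$, every $\delta>0$ and every $\omega\in\mathscr U$ there exists $y\in B(x,\delta)\cap Q$ with $\limsup_{n\to\infty}\frac1n\sum_{i=0}^{n-1}d(\phi(i,y,\omega),Q)\ge\varepsilon$. *)

theory Defs
  imports "HOL-Analysis.Analysis" "HOL-Library.Liminf_Limsup"
begin

fun phi :: "('x \<Rightarrow> 'u \<Rightarrow> 'x) \<Rightarrow> nat \<Rightarrow> 'x \<Rightarrow> (nat \<Rightarrow> 'u) \<Rightarrow> 'x" where
  "phi F 0 x w = x"
| "phi F (Suc k) x w = F (phi F k x w) (w k)"

definition controls :: "'u set \<Rightarrow> (nat \<Rightarrow> 'u) set" where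
  "controls U = {w. \<forall>i. w i \<in> U}"

definition orbit_plus :: "('x \<Rightarrow> 'u \<Rightarrow> 'x) \<Rightarrow> 'u set \<Rightarrow> 'x \<Rightarrow> 'x set" where
  "orbit_plus F U x = {phi F m x w | m w. w \<in> controls U}"

definition cs_props :: "('x::topological_space \<Rightarrow> 'u \<Rightarrow> 'x) \<Rightarrow> 'u set \<Rightarrow> 'x set \<Rightarrow> bool" where
  "cs_props F U D \<longleftrightarrow>
     (\<forall>x\<in>D. \<exists>w\<in>controls U. \<forall>k. phi F k x w \<in> D) \<and>
     (\<forall>x\<in>D. D \<subseteq> closure (orbit_plus F U x))"

definition control_set :: "('x::topological_space \<Rightarrow> 'u \<Rightarrow> 'x) \<Rightarrow> 'u set \<Rightarrow> 'x set \<Rightarrow> bool" where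
  "control_set F U D \<longleftrightarrow> cs_props F U D \<and>
     (\<forall>D'. D \<subseteq> D' \<and> cs_props F U D' \<longrightarrow> D' = D)"

definition mean_dist :: "('x::metric_space \<Rightarrow> 'u \<Rightarrow> 'x) \<Rightarrow> 'x set \<Rightarrow> 'x \<Rightarrow> (nat \<Rightarrow> 'u) \<Rightarrow> ereal" where
  "mean_dist F Q y w = limsup (\<lambda>n. ereal ((1 / real n) * (\<Sum>i<n. infdist (phi F i y w) Q)))"

definition mean_equi_invariant_point :: "('x::metric_space \<Rightarrow> 'u \<Rightarrow> 'x) \<Rightarrow> 'u set \<Rightarrow> 'x set \<Rightarrow> 'x \<Rightarrow> bool" where
  "mean_equi_invariant_point F U Q x \<longleftrightarrow> x \<in> Q \<and>
     (\<forall>\<epsilon>>0. \<exists>\<delta>>0. \<exists>w\<in>controls U. \<forall>y\<in>ball x \<delta> \<inter> Q. mean_dist F Q y w < ereal \<epsilon>)"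

definition mean_equi_invariant :: "('x::metric_space \<Rightarrow> 'u \<Rightarrow> 'x) \<Rightarrow> 'u set \<Rightarrow> 'x set \<Rightarrow> bool" where
  "mean_equi_invariant F U Q \<longleftrightarrow> (\<forall>x\<in>Q. mean_equi_invariant_point F U Q x)"

definition mean_unstable :: "('x::metric_space \<Rightarrow> 'u \<Rightarrow> 'x) \<Rightarrow> 'u set \<Rightarrow> 'x set \<Rightarrow> bool" where
  "mean_unstable F U Q \<longleftrightarrow> (\<exists>\<epsilon>>0. \<forall>x\<in>Q. \<forall>\<delta>>0. \<forall>w\<in>controls U.
       \<exists>y\<in>ball x \<delta> \<inter> Q. mean_dist F Q y w \<ge> ereal \<epsilon>)"

end

theory Submission
  imports Defs
begin

text \<open>If \<open>Q\<close> is not mean unstable, then for every \<open>\<epsilon>\<close> some point \<open>x \<in> Q\<close> has a neighbourhood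
  in \<open>Q\<close> whose points all have mean distance \<open>< \<epsilon>\<close> from \<open>Q\<close> under one common control \<open>w\<close>.
  Any \<open>z \<in> Q\<close> inherits this: since \<open>Q\<close> is a control set whose interior is dense in it, \<open>z\<close>
  can be steered into an open subset of that neighbourhood, hence by continuity so can all
  points near \<open>z\<close>, with the same control; afterwards \<open>w\<close> is applied. The finite steering
  prefix does not affect the Cesaro limsup, so \<open>z\<close> is a mean equi-invariant point.\<close>

definition concat_controls :: "nat \<Rightarrow> (nat \<Rightarrow> 'u) \<Rightarrow> (nat \<Rightarrow> 'u) \<Rightarrow> nat \<Rightarrow> 'u" where
  "concat_controls m w' w = (\<lambda>j. if j < m then w' j else w (j - m))"

lemma concat_controls_in_controls:
  "w' \<in> controls U \<Longrightarrow> w \<in> controls U \<Longrightarrow> concat_controls m w' w \<in> controls U"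
  by (simp add: concat_controls_def controls_def)

lemma phi_concat_controls_prefix:
  "k \<le> m \<Longrightarrow> phi F k y (concat_controls m w' w) = phi F k y w'"
  by (induction k) (auto simp: concat_controls_def)

lemma phi_concat_controls:
  "phi F (m + i) y (concat_controls m w' w) = phi F i (phi F m y w') w"
proof (induction i)
  case 0
  show ?case by (simp add: phi_concat_controls_prefix)
next
  case (Suc i)
  then show ?case by (simp add: concat_controls_def)
qed

lemma continuous_on_phi_fixed_control:
  assumes "continuous_on (UNIV \<times> controls U) (\<lambda>(x, w). phi F k x w)"
    and "w \<in> controls U"
  shows "continuous_on UNIV (\<lambda>x. phi F k x w)"
proof -
  have "continuous_on UNIV ((\<lambda>(x, w). phi F k x w) \<circ> (\<lambda>x. (x, w)))"
    using assms by (intro continuous_on_compose continuous_intros)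
      (auto intro: continuous_on_subset)
  then show ?thesis by (simp add: o_def)
qed

lemma sum_lessThan_add_split:
  "(\<Sum>i<m + k. a i) = (\<Sum>i<m. a i) + (\<Sum>i<k. a (m + i :: nat))"
  by (induction k) (auto simp: add.assoc)

text \<open>Prepending \<open>m\<close> arbitrary terms to a nonnegative sequence cannot push its Cesaro limsup
  up to a strict bound: the prefix contributes \<open>C / n \<rightarrow> 0\<close>.\<close>

lemma cesaro_limsup_prefix_less:
  fixes a b :: "nat \<Rightarrow> real"
  assumes b_nonneg: "\<And>i. b i \<ge> 0"
    and a_shift: "\<And>i. a (m + i) = b i"
    and less: "limsup (\<lambda>n. ereal (1 / real n * (\<Sum>i<n. b i))) < ereal e"
  shows "limsup (\<lambda>n. ereal (1 / real n * (\<Sum>i<n. a i))) < ereal e"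
proof -
  obtain e' where e': "limsup (\<lambda>n. ereal (1 / real n * (\<Sum>i<n. b i))) < ereal e'" "e' < e"
    using ereal_dense2[OF less] by auto
  then obtain N where N: "\<And>n. n \<ge> N \<Longrightarrow> 1 / real n * (\<Sum>i<n. b i) < e'"
    using Limsup_lessD[OF e'(1)] by (auto simp: eventually_sequentially)
  define C where "C = (\<Sum>i<m. a i)"
  define d where "d = (e - e') / 2"
  have d: "d > 0" using e' by (simp add: d_def)
  obtain K :: nat where K: "\<bar>C\<bar> / d < K" using reals_Archimedean2 by blast
  have bound: "1 / real n * (\<Sum>i<n. a i) \<le> e' + d" if n: "n \<ge> N + m + K + 1" for n
  proof -
    have split: "(\<Sum>i<n. a i) = C + (\<Sum>i<n - m. b i)"
      using sum_lessThan_add_split[of a m "n - m"] n by (simp add: C_def a_shift)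
    have tail: "(\<Sum>i<n - m. b i) < e' * real (n - m)"
      using N[of "n - m"] n by (simp add: field_simps)
    moreover have "(\<Sum>i<n - m. b i) \<ge> 0" using b_nonneg by (simp add: sum_nonneg)
    ultimately have "e' > 0" by (smt (verit) mult_nonpos_nonneg of_nat_0_le_iff)
    then have "(\<Sum>i<n - m. b i) \<le> e' * real n"
      using tail mult_left_mono[of "real (n - m)" "real n" e'] by linarith
    moreover have "C \<le> d * real n"
    proof -
      have "\<bar>C\<bar> < d * real K" using K d by (simp add: field_simps)
      moreover have "real K \<le> real n" using n by simp
      ultimately show ?thesis using d by (smt (verit) mult_left_mono)
    qed
    ultimately show ?thesis using n split by (simp add: field_simps)
  qed
  have "limsup (\<lambda>n. ereal (1 / real n * (\<Sum>i<n. a i))) \<le> ereal (e' + d)"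
    by (intro Limsup_bounded eventually_sequentiallyI[of "N + m + K + 1"]) (use bound in simp)
  also have "\<dots> < ereal e" using e'(2) by (simp add: d_def field_simps)
  finally show ?thesis .
qed

lemma mean_dist_concat_controls_less:
  assumes "mean_dist F Q (phi F m y w') w < ereal \<epsilon>"
  shows "mean_dist F Q y (concat_controls m w' w) < ereal \<epsilon>"
  using assms unfolding mean_dist_def
  by (rule cesaro_limsup_prefix_less[where m = m, rotated 2])
    (auto simp: phi_concat_controls infdist_nonneg)

lemma steer_neighbourhood_into_open:
  assumes cont: "\<And>k. continuous_on (UNIV \<times> controls U) (\<lambda>(x, w). phi F k x w)"
    and "p \<in> closure (orbit_plus F U z)" and "open V" and "p \<in> V"
  obtains m w' \<delta> where "w' \<in> controls U" "\<delta> > 0" "\<And>y. y \<in> ball z \<delta> \<Longrightarrow> phi F m y w' \<in> V"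
proof -
  obtain m w' where w': "w' \<in> controls U" and "phi F m z w' \<in> V"
    using assms(2-4) unfolding closure_iff_nhds_not_empty orbit_plus_def by blast
  moreover have "open ((\<lambda>y. phi F m y w') -` V)"
    using open_vimage[OF \<open>open V\<close> continuous_on_phi_fixed_control[OF cont w']] .
  ultimately obtain \<delta> where "\<delta> > 0" "ball z \<delta> \<subseteq> (\<lambda>y. phi F m y w') -` V"
    using open_contains_ball by blast
  with w' that show ?thesis by blast
qed

lemma mean_bound_spreads_in_control_set:
  assumes cont: "\<And>k. continuous_on (UNIV \<times> controls U) (\<lambda>(x, w). phi F k x w)"
    and Q: "control_set F U Q" and dense_int: "closure (interior Q) = closure Q"
    and "x \<in> Q" "\<delta> > 0" "w \<in> controls U"
    and good: "\<And>y. y \<in> ball x \<delta> \<inter> Q \<Longrightarrow> mean_dist F Q y w < ereal \<epsilon>"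
    and "z \<in> Q"
  shows "\<exists>\<delta>'>0. \<exists>w''\<in>controls U. \<forall>y\<in>ball z \<delta>' \<inter> Q. mean_dist F Q y w'' < ereal \<epsilon>"
proof -
  define V where "V = ball x \<delta> \<inter> interior Q"
  have "x \<in> closure (interior Q)"
    using \<open>x \<in> Q\<close> dense_int closure_subset by blast
  then obtain p where p: "p \<in> interior Q" "dist p x < \<delta>"
    using \<open>\<delta> > 0\<close> unfolding closure_approachable by blast
  then have "p \<in> V" by (simp add: V_def dist_commute)
  moreover have "p \<in> closure (orbit_plus F U z)"
    using Q \<open>z \<in> Q\<close> p(1) interior_subset
    unfolding control_set_def cs_props_def by blast
  ultimately obtain m w' \<delta>' where w': "w' \<in> controls U" and "\<delta>' > 0"
    and steer: "\<And>y. y \<in> ball z \<delta>' \<Longrightarrow> phi F m y w' \<in> V"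
    using steer_neighbourhood_into_open[OF cont] by (metis V_def open_Int open_ball open_interior)
  have "mean_dist F Q y (concat_controls m w' w) < ereal \<epsilon>" if "y \<in> ball z \<delta>'" for y
    using steer[OF that] good interior_subset
    by (intro mean_dist_concat_controls_less) (auto simp: V_def)
  then show ?thesis
    using \<open>\<delta>' > 0\<close> concat_controls_in_controls[OF w' \<open>w \<in> controls U\<close>] by blast
qed

theorem mainTheorem12:
  fixes F :: "'x::metric_space \<Rightarrow> 'u::metric_space \<Rightarrow> 'x"
    and U :: "'u set" and Q :: "'x set"
  assumes "compact U"
    and "\<And>u. u \<in> U \<Longrightarrow> continuous_on UNIV (\<lambda>x. F x u)"
    and "\<And>k. continuous_on (UNIV \<times> controls U) (\<lambda>(x, w). phi F k x w)"
    and "control_set F U Q"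
    and "closure (interior Q) = closure Q"
  shows "mean_equi_invariant F U Q \<or> mean_unstable F U Q"
proof (rule disjCI)
  assume "\<not> mean_unstable F U Q"
  then have stable: "\<forall>\<epsilon>>0. \<exists>x\<in>Q. \<exists>\<delta>>0. \<exists>w\<in>controls U.
      \<forall>y\<in>ball x \<delta> \<inter> Q. mean_dist F Q y w < ereal \<epsilon>"
    unfolding mean_unstable_def by (auto simp: not_le)
  show "mean_equi_invariant F U Q"
    unfolding mean_equi_invariant_def mean_equi_invariant_point_def
  proof (intro ballI conjI allI impI)
    fix z and \<epsilon> :: real
    assume "z \<in> Q" "\<epsilon> > 0"
    with stable obtain x \<delta> w where "x \<in> Q" "\<delta> > 0" "w \<in> controls U"
      and "\<forall>y\<in>ball x \<delta> \<inter> Q. mean_dist F Q y w < ereal \<epsilon>"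
      by blast
    then show "\<exists>\<delta>>0. \<exists>w\<in>controls U. \<forall>y\<in>ball z \<delta> \<inter> Q. mean_dist F Q y w < ereal \<epsilon>"
      using mean_bound_spreads_in_control_set[OF assms(3,4,5)] \<open>z \<in> Q\<close> by blast
  qed
qed

end
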